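(* Let $(M,d)$ be a metric space and let $T: M \to M$ be an orbitally wrt nonexpansive mapping. Then $T$ diminishes the radius of invariant admissible subsets of $M$; that is, for every admissible set $A \subseteq M$ with $T(A)\subseteq A$ we have $r_{Tx}(T(A)) \le r_x(A)$ for every $x \in M$.
   Context: For $x\in M$ and $K\subseteq M$, $r_x(K)=\sup\{d(x,y): y\in K\}$. The orbit of $y$ is $O_T(y)=\{y,Ty,T^2y,\dots\}$. $T$ is orbitally wrt nonexpansive if $d(Tx,Ty)\le r_x(O_T(y))$ for all $x,y\in M$. A bounded subset $K\subseteq M$ is admissible if it equals its cover $\mathrm{cov}(K)$, the intersection of all closed balls of $M$ containing $K$; equivalently, it is a bounded intersection of closed balls of $M$. *)

theory Defs
  imports "HOL-Analysis.Analysis"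
begin

text \<open>Radius of K relative to x: r_x(K) = sup {d(x,y) : y in K}, valued in the extended
  reals so that unbounded sets (e.g. infinite orbits) have radius infinity.\<close>
definition rad :: "'a::metric_space \<Rightarrow> 'a set \<Rightarrow> ereal" where
  "rad x K = (SUP y\<in>K. ereal (dist x y))"

definition orbit :: "('a \<Rightarrow> 'a) \<Rightarrow> 'a \<Rightarrow> 'a set" where
  "orbit T y = {(T ^^ n) y | n. True}"

definition orbitally_wrt_nonexpansive :: "('a::metric_space \<Rightarrow> 'a) \<Rightarrow> bool" where
  "orbitally_wrt_nonexpansive T \<longleftrightarrow>
     (\<forall>x y. ereal (dist (T x) (T y)) \<le> rad x (orbit T y))"

definition cov :: "'a::metric_space set \<Rightarrow> 'a set" where
  "cov K = \<Inter>{cball c r | c r. r \<ge> 0 \<and> K \<subseteq> cball c r}"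

definition admissible :: "'a::metric_space set \<Rightarrow> bool" where
  "admissible K \<longleftrightarrow> bounded K \<and> cov K = K"

end

theory Submission
  imports Defs
begin

text \<open>For y in A the orbit of y stays in the invariant set A, so
  d(Tx, Ty) \<le> r_x(O_T(y)) \<le> r_x(A); taking the supremum over y gives the claim.\<close>

lemma orbit_subset_invariant:
  assumes "T ` A \<subseteq> A" and "y \<in> A"
  shows "orbit T y \<subseteq> A"
proof -
  have "(T ^^ n) y \<in> A" for n
    by (induction n) (use assms in auto)
  then show ?thesis
    unfolding orbit_def by auto
qed

lemma rad_mono:
  assumes "K \<subseteq> L"
  shows "rad x K \<le> rad x L"
  unfolding rad_def using assms by (rule SUP_subset_mono) simp

lemma rad_image_le_if_invariant:
  assumes "orbitally_wrt_nonexpansive T" and "T ` A \<subseteq> A"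
  shows "rad (T x) (T ` A) \<le> rad x A"
  unfolding rad_def image_image
proof (rule SUP_least)
  fix y
  assume "y \<in> A"
  have "ereal (dist (T x) (T y)) \<le> rad x (orbit T y)"
    using assms(1) unfolding orbitally_wrt_nonexpansive_def by blast
  also have "\<dots> \<le> rad x A"
    using orbit_subset_invariant[OF assms(2) \<open>y \<in> A\<close>] by (rule rad_mono)
  finally show "ereal (dist (T x) (T y)) \<le> (SUP y\<in>A. ereal (dist x y))"
    unfolding rad_def .
qed

theorem lemma2p1:
  fixes T :: "'a::metric_space \<Rightarrow> 'a"
  assumes "orbitally_wrt_nonexpansive T"
  shows "\<forall>A. admissible A \<and> T ` A \<subseteq> A \<longrightarrow> (\<forall>x. rad (T x) (T ` A) \<le> rad x A)"
  using rad_image_le_if_invariant[OF assms] by blast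

end
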